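(* For each positive integer $k$, $R_k\cong R_k^{k+1}$. Explicitly, for $A\in R_k$ and $l=1,\dots,k+1$, let $A_l$ be the $\mathbb{N}\times\mathbb{N}$ matrix whose first column is the $l$-th column of $A$ and whose blocks satisfy $A_l^{m,n}=A^{m,\,n+l+k(n-2)}$ for all $m\ge1$, $n\ge2$; then each $A_l\in R_k$ and the map $A\mapsto (A_1,\dots,A_{k+1})$ is a bijective left-$R_k$-linear map $R_k\to R_k^{k+1}$.
   Context: $\mathbb{N}=\{1,2,3,\dots\}$. $R$ denotes the ring of all $\mathbb{N}\times\mathbb{N}$ integer matrices with only finitely many nonzero entries in each row and each column, with entrywise addition and multiplication $(AB)_{i,j}=\sum_{l\ge1}a_{i,l}b_{l,j}$. Fix a positive integer $k$. Partition $\mathbb{N}$ into consecutive blocks $J_1=\{1\}$ and, for $m\ge2$, $J_m=\{2+k(m-2),\dots,1+k(m-1)\}$. For $A\in R$, the block $A^{m,n}$ is the submatrix with rows indexed by $J_m$ and columns by $J_n$. $R_k$ is the subring of $A\in R$ such that for all but finitely many pairs $(m,n)$ with $m,n\ge2$, $A^{m,n}=cI_k$ for some integer $c$. For a ring $S$, $S^n$ is the free left $S$-module of $n$-tuples with componentwise operations; $S^m\cong S^n$ means there is a bijective left-$S$-linear map $S^m\to S^n$, equivalently there exist $X\in M_{m\times n}(S)$, $Y\in M_{n\times m}(S)$ with $XY=I_m$, $YX=I_n$. *)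

theory Defs
  imports Main
begin

text \<open>N x N integer matrices are functions nat => nat => int; indices range over
  N = {1,2,...}; index 0 is unused and all entries involving it are required to be 0.\<close>

type_synonym mat = "nat \<Rightarrow> nat \<Rightarrow> int"

definition inR :: "mat \<Rightarrow> bool" where
  "inR A \<longleftrightarrow> (\<forall>j. A 0 j = 0) \<and> (\<forall>i. A i 0 = 0) \<and>
     (\<forall>i. finite {j. A i j \<noteq> 0}) \<and> (\<forall>j. finite {i. A i j \<noteq> 0})"

definition mat_add :: "mat \<Rightarrow> mat \<Rightarrow> mat" where
  "mat_add A B = (\<lambda>i j. A i j + B i j)"

definition mat_zero :: mat where
  "mat_zero = (\<lambda>i j. 0)"

definition mat_mult :: "mat \<Rightarrow> mat \<Rightarrow> mat" where
  "mat_mult A B = (\<lambda>i j. \<Sum>l\<in>{l. 1 \<le> l \<and> A i l \<noteq> 0}. A i l * B l j)"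

text \<open>Global index of the p-th element (p in {1..k}) of block J_m, m >= 2:
  J_m = {2+k(m-2), ..., 1+k(m-1)}.\<close>
definition bidx :: "nat \<Rightarrow> nat \<Rightarrow> nat \<Rightarrow> nat" where
  "bidx k m p = 1 + k * (m - 2) + p"

definition block_scalar :: "nat \<Rightarrow> mat \<Rightarrow> nat \<Rightarrow> nat \<Rightarrow> int \<Rightarrow> bool" where
  "block_scalar k A m n c \<longleftrightarrow>
     (\<forall>p\<in>{1..k}. \<forall>q\<in>{1..k}. A (bidx k m p) (bidx k n q) = (if p = q then c else 0))"

definition inRk :: "nat \<Rightarrow> mat \<Rightarrow> bool" where
  "inRk k A \<longleftrightarrow> inR A \<and>
     finite {(m, n). 2 \<le> m \<and> 2 \<le> n \<and> \<not> (\<exists>c. block_scalar k A m n c)}"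

text \<open>For a column index j >= 2: j lies in block J_n with n = (j-2) div k + 2, at position
  q = (j-2) mod k + 1.  Column j of A_l is column bidx k n' q of A with n' = n + l + k(n-2),
  i.e. A_l^{m,n} = A^{m,n'}.\<close>
definition col_src :: "nat \<Rightarrow> nat \<Rightarrow> nat \<Rightarrow> nat" where
  "col_src k l j = (let n = (j - 2) div k + 2; q = (j - 2) mod k + 1
                    in bidx k (n + l + k * (n - 2)) q)"

definition A_sub :: "nat \<Rightarrow> mat \<Rightarrow> nat \<Rightarrow> mat" where
  "A_sub k A l = (\<lambda>i j. if j = 0 then 0 else if j = 1 then A i l else A i (col_src k l j))"

definition tuples :: "nat \<Rightarrow> (nat \<Rightarrow> mat) set" where
  "tuples k = {v. (\<forall>l\<in>{1..k+1}. inRk k (v l)) \<and> (\<forall>l. l \<notin> {1..k+1} \<longrightarrow> v l = mat_zero)}"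

definition left_linear :: "nat \<Rightarrow> (mat \<Rightarrow> nat \<Rightarrow> mat) \<Rightarrow> bool" where
  "left_linear k f \<longleftrightarrow>
     (\<forall>A B. inRk k A \<longrightarrow> inRk k B \<longrightarrow> f (mat_add A B) = (\<lambda>l. mat_add (f A l) (f B l))) \<and>
     (\<forall>C A. inRk k C \<longrightarrow> inRk k A \<longrightarrow> f (mat_mult C A) = (\<lambda>l. mat_mult C (f A l)))"

definition Phi :: "nat \<Rightarrow> mat \<Rightarrow> nat \<Rightarrow> mat" where
  "Phi k A = (\<lambda>l. if l \<in> {1..k+1} then A_sub k A l else mat_zero)"

end

theory Submission imports Defs begin

text \<open>The map \<open>A \<mapsto> (A_1, \<dots>, A_(k+1))\<close> only redistributes columns:
  \<open>(l, j) \<mapsto> col_index k l j\<close> is a bijection from \<open>{1..k+1} \<times> \<nat>\<close> onto \<open>\<nat>\<close>, so every column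
  of \<open>A\<close> is a column of exactly one \<open>A_l\<close>, and \<open>Phi k\<close> commutes with addition and left
  multiplication. The bijection maps the block column \<open>J_n\<close> of \<open>A_l\<close> (\<open>n \<ge> 2\<close>) onto the block
  column \<open>J_(n+l+k(n-2))\<close> of \<open>A\<close> position by position, so scalar blocks correspond to scalar
  blocks. The only block column of \<open>A\<close> missed this way is \<open>J_2\<close>, made of first columns of the
  \<open>A_l\<close>; its columns being finitely supported, it has only finitely many non-scalar blocks.\<close>

definition col_index :: "nat \<Rightarrow> nat \<Rightarrow> nat \<Rightarrow> nat" where
  "col_index k l j = (if j = 1 then l else col_src k l j)"

text \<open>Writing \<open>c - 2 = k e + r\<close> and \<open>e - 1 = (k+1) d + (l - 1)\<close>, column \<open>c \<ge> k+2\<close> is at position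
  \<open>r\<close> of block \<open>J_(e+2)\<close> of \<open>A\<close>, which is block \<open>J_(d+2)\<close> of \<open>A_l\<close>.\<close>
definition col_position :: "nat \<Rightarrow> nat \<Rightarrow> nat \<times> nat" where
  "col_position k c = (if c \<le> k+1 then (c, 1) else
     (((c-2) div k - 1) mod (k+1) + 1, 2 + k*(((c-2) div k - 1) div (k+1)) + (c-2) mod k))"

definition block_shift :: "nat \<Rightarrow> nat \<Rightarrow> nat \<Rightarrow> nat" where
  "block_shift k l n = n + l + k*(n-2)"

definition non_scalar_blocks :: "nat \<Rightarrow> mat \<Rightarrow> (nat \<times> nat) set" where
  "non_scalar_blocks k A = {(m, n). 2 \<le> m \<and> 2 \<le> n \<and> \<not> (\<exists>c. block_scalar k A m n c)}"

definition interleave :: "nat \<Rightarrow> (nat \<Rightarrow> mat) \<Rightarrow> mat" where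
  "interleave k v = (\<lambda>i c. if c = 0 then 0 else case col_position k c of (l, j) \<Rightarrow> v l i j)"

lemma mult_add_div_mod:
  fixes r :: nat
  assumes "r < m"
  shows "(m*a + r) div m = a" "(m*a + r) mod m = r"
  using assms by simp_all

lemma col_src_closed_form:
  assumes "2 \<le> j"
  shows "col_src k l j = 2 + k*((k+1)*((j-2) div k) + l) + (j-2) mod k"
proof -
  define d r where "d = (j-2) div k" and "r = (j-2) mod k"
  have "col_src k l j = 1 + k * (d + 2 + l + k * d - 2) + (r + 1)"
    by (simp add: col_src_def bidx_def Let_def d_def r_def)
  also have "\<dots> = 2 + k*((k+1)*d + l) + r"
    by (simp add: algebra_simps)
  finally show ?thesis
    by (simp add: d_def r_def)
qed

lemma col_index_nonzero: "1 \<le> l \<Longrightarrow> col_index k l j \<noteq> 0"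
  by (simp add: col_index_def col_src_def bidx_def Let_def)

lemma A_sub_eq_col_index: "j \<noteq> 0 \<Longrightarrow> A_sub k A l i j = A i (col_index k l j)"
  by (simp add: A_sub_def col_index_def)

lemma col_position_col_index:
  assumes k: "1 \<le> k" and l: "l \<in> {1..k+1}" and j: "1 \<le> j"
  shows "col_position k (col_index k l j) = (l, j)"
proof (cases "j = 1")
  case True
  with l show ?thesis
    by (simp add: col_index_def col_position_def)
next
  case False
  define d r where "d = (j-2) div k" and "r = (j-2) mod k"
  define e where "e = (k+1)*d + l"
  have r: "r < k" and j_eq: "j = 2 + k*d + r"
    using k False j by (simp_all add: d_def r_def)
  have c: "col_index k l j = 2 + k*e + r"
    using False j col_src_closed_form[of j k l] by (simp add: col_index_def e_def d_def r_def)
  have "k*1 \<le> k*e"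
    using l by (intro mult_left_mono) (auto simp: e_def)
  then have c_large: "\<not> 2 + k*e + r \<le> k+1"
    using k by linarith
  have "e - 1 = (k+1)*d + (l - 1)" and "l - 1 < k+1"
    using l by (auto simp: e_def)
  then have "(e-1) div (k+1) = d" "(e-1) mod (k+1) = l - 1"
    by (simp_all only: mult_add_div_mod)
  with c c_large r l j_eq show ?thesis
    by (simp add: col_position_def)
qed

lemma col_index_col_position:
  assumes k: "1 \<le> k" and c: "1 \<le> c" and pos: "col_position k c = (l, j)"
  shows "l \<in> {1..k+1}" "1 \<le> j" "col_index k l j = c"
proof -
  have "l \<in> {1..k+1} \<and> 1 \<le> j \<and> col_index k l j = c"
  proof (cases "c \<le> k+1")
    case True
    with c pos show ?thesis
      by (simp add: col_position_def col_index_def)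
  next
    case False
    define e r where "e = (c-2) div k" and "r = (c-2) mod k"
    define d where "d = (e-1) div (k+1)"
    have r: "r < k" and c_eq: "c = 2 + k*e + r"
      using k False by (simp_all add: e_def r_def)
    have "e \<noteq> 0"
    proof
      assume "e = 0"
      with c_eq r False show False
        by simp
    qed
    have l_eq: "l = (e-1) mod (k+1) + 1"
      using pos False by (simp add: col_position_def e_def r_def)
    then have "e - 1 = (k+1)*d + (l - 1)"
      using mult_div_mod_eq[of "k+1" "e-1"] by (simp add: d_def)
    with \<open>e \<noteq> 0\<close> l_eq have e_eq: "e = (k+1)*d + l"
      by linarith
    have j_eq: "j = 2 + k*d + r"
      using pos False by (simp add: col_position_def e_def r_def d_def)
    have "col_index k l j = 2 + k*((k+1)*d + l) + r"
      using col_src_closed_form[of j k l] r by (simp add: col_index_def j_eq)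
    moreover have "l \<in> {1..k+1}"
      using l_eq by simp
    ultimately show ?thesis
      using c_eq e_eq j_eq by simp
  qed
  then show "l \<in> {1..k+1}" "1 \<le> j" "col_index k l j = c"
    by simp_all
qed

lemma inj_on_col_index:
  assumes "1 \<le> k" and "l \<in> {1..k+1}"
  shows "inj_on (col_index k l) {1..}"
  by (rule inj_on_inverseI[where g = "\<lambda>c. snd (col_position k c)"])
    (simp add: col_position_col_index[OF assms])

lemma col_index_bidx:
  assumes "2 \<le> n" and q: "q \<in> {1..k}"
  shows "col_index k l (bidx k n q) = bidx k (block_shift k l n) q"
proof -
  obtain n0 where n0: "n = n0 + 2"
    using assms(1) le_Suc_ex by (metis add.commute)
  have "q - 1 < k" and "bidx k n q = 2 + k*n0 + (q - 1)"
    using q by (auto simp: bidx_def n0)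
  then have "col_index k l (bidx k n q) = 2 + k*((k+1)*n0 + l) + (q - 1)"
    using col_src_closed_form[of "bidx k n q" k l] q by (simp add: col_index_def)
  also have "\<dots> = bidx k (block_shift k l n) q"
    using q by (simp add: bidx_def block_shift_def n0 algebra_simps)
  finally show ?thesis .
qed

lemma block_scalar_A_sub_iff:
  assumes "2 \<le> n"
  shows "block_scalar k (A_sub k A l) m n c \<longleftrightarrow> block_scalar k A m (block_shift k l n) c"
proof -
  have "A_sub k A l (bidx k m p) (bidx k n q) = A (bidx k m p) (bidx k (block_shift k l n) q)"
    if "q \<in> {1..k}" for p q
    using that assms A_sub_eq_col_index[of "bidx k n q"] col_index_bidx
    by (simp add: bidx_def)
  then show ?thesis
    by (simp add: block_scalar_def)
qed

lemma inj_on_block_shift: "inj_on (block_shift k l) {2..}"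
proof (rule inj_onI)
  fix n n' assume "n \<in> {2..}" "n' \<in> {2..}" and eq: "block_shift k l n = block_shift k l n'"
  then obtain a b where "n = a + 2" "n' = b + 2"
    by (metis add.commute atLeast_iff le_Suc_ex)
  with eq have "(k+1)*a = (k+1)*b"
    by (simp add: block_shift_def algebra_simps)
  then have "a = b"
    by (metis mult_cancel1 add_is_0 one_neq_zero)
  with \<open>n = a + 2\<close> \<open>n' = b + 2\<close> show "n = n'"
    by simp
qed

lemma block_shift_surj:
  assumes "3 \<le> n"
  obtains l n0 where "l \<in> {1..k+1}" "2 \<le> n0" "n = block_shift k l n0"
proof
  define e where "e = n - 3"
  show "e mod (k+1) + 1 \<in> {1..k+1}" "2 \<le> e div (k+1) + 2"
    by simp_all
  have "n = (k+1) * (e div (k+1)) + e mod (k+1) + 3"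
    using assms mult_div_mod_eq[of "k+1" e] by (simp add: e_def)
  then show "n = block_shift k (e mod (k+1) + 1) (e div (k+1) + 2)"
    by (simp add: block_shift_def algebra_simps)
qed

lemma inRk_iff_finite_non_scalar_blocks: "inRk k A \<longleftrightarrow> inR A \<and> finite (non_scalar_blocks k A)"
  by (simp add: inRk_def non_scalar_blocks_def)

lemma non_scalar_blocks_A_sub:
  "non_scalar_blocks k (A_sub k A l) = map_prod id (block_shift k l) -` non_scalar_blocks k A \<inter> {2..} \<times> {2..}"
  using block_scalar_A_sub_iff by (auto simp: non_scalar_blocks_def block_shift_def)

text \<open>A non-scalar block has a nonzero entry, and the rows of block \<open>J_m\<close> have index at least \<open>m - 2\<close>.\<close>
lemma finite_non_scalar_blocks_in_column:
  assumes "inR A"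
  shows "finite {m. 2 \<le> m \<and> \<not> (\<exists>c. block_scalar k A m n c)}"
proof -
  let ?S = "\<Union>q\<in>{1..k}. {i. A i (bidx k n q) \<noteq> 0}"
  have "{m. 2 \<le> m \<and> \<not> (\<exists>c. block_scalar k A m n c)} \<subseteq> (\<Union>i\<in>?S. {..i+2})"
  proof
    fix m assume "m \<in> {m. 2 \<le> m \<and> \<not> (\<exists>c. block_scalar k A m n c)}"
    then have "\<not> block_scalar k A m n 0"
      by blast
    then obtain p q where p: "p \<in> {1..k}" and "q \<in> {1..k}" "A (bidx k m p) (bidx k n q) \<noteq> 0"
      unfolding block_scalar_def by (auto split: if_splits)
    moreover have "m \<le> bidx k m p + 2"
    proof -
      have "m - 2 \<le> k * (m - 2)"
        using p by simp
      then show ?thesis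
        unfolding bidx_def by linarith
    qed
    ultimately show "m \<in> (\<Union>i\<in>?S. {..i+2})"
      by auto
  qed
  moreover have "finite ?S"
    using assms by (simp add: inR_def)
  ultimately show ?thesis
    by (auto intro: finite_subset)
qed

lemma inR_A_sub:
  assumes k: "1 \<le> k" and l: "l \<in> {1..k+1}" and A: "inR A"
  shows "inR (A_sub k A l)"
  unfolding inR_def
proof (intro conjI allI)
  fix i
  have "{j. A_sub k A l i j \<noteq> 0} \<subseteq> col_index k l -` {c. A i c \<noteq> 0} \<inter> {1..}"
    by (auto simp: A_sub_def col_index_def split: if_splits)
  moreover have "finite (col_index k l -` {c. A i c \<noteq> 0} \<inter> {1..})"
    using A inj_on_col_index[OF k l] by (intro finite_vimage_IntI) (auto simp: inR_def)
  ultimately show "finite {j. A_sub k A l i j \<noteq> 0}"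
    by (rule finite_subset)
next
  fix j
  have "{i. A_sub k A l i j \<noteq> 0} \<subseteq> {i. A i (col_index k l j) \<noteq> 0}"
    by (auto simp: A_sub_def col_index_def)
  then show "finite {i. A_sub k A l i j \<noteq> 0}"
    using A by (auto simp: inR_def intro: finite_subset)
qed (use A in \<open>auto simp: A_sub_def inR_def\<close>)

lemma A_sub_inRk:
  assumes k: "1 \<le> k" and l: "l \<in> {1..k+1}" and A: "inRk k A"
  shows "inRk k (A_sub k A l)"
proof -
  have "finite (map_prod id (block_shift k l) -` non_scalar_blocks k A \<inter> {2..} \<times> {2..})"
    using A by (intro finite_vimage_IntI map_prod_inj_on inj_on_block_shift)
      (auto simp: inRk_iff_finite_non_scalar_blocks)
  with A show ?thesis
    by (simp add: inRk_iff_finite_non_scalar_blocks inR_A_sub[OF k l] non_scalar_blocks_A_sub)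
qed

lemma interleave_Phi:
  assumes k: "1 \<le> k" and A: "inR A"
  shows "interleave k (Phi k A) = A"
proof (intro ext)
  fix i c
  show "interleave k (Phi k A) i c = A i c"
  proof (cases "c = 0")
    case True
    with A show ?thesis
      by (simp add: interleave_def inR_def)
  next
    case False
    obtain l j where pos: "col_position k c = (l, j)"
      by fastforce
    have "1 \<le> c"
      using False by simp
    note l = col_index_col_position(1)[OF k this pos]
      and j = col_index_col_position(2)[OF k this pos]
      and c = col_index_col_position(3)[OF k this pos]
    from False pos l have "interleave k (Phi k A) i c = A_sub k A l i j"
      by (simp add: interleave_def Phi_def)
    also from j c have "\<dots> = A i c"
      by (simp add: A_sub_eq_col_index)
    finally show ?thesis .
  qed
qed

lemma A_sub_interleave:
  assumes k: "1 \<le> k" and l: "l \<in> {1..k+1}" and vl: "inR (v l)"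
  shows "A_sub k (interleave k v) l = v l"
proof (intro ext)
  fix i j
  show "A_sub k (interleave k v) l i j = v l i j"
  proof (cases "j = 0")
    case True
    with vl show ?thesis
      by (simp add: A_sub_def inR_def)
  next
    case False
    then have "A_sub k (interleave k v) l i j = interleave k v i (col_index k l j)"
      by (rule A_sub_eq_col_index)
    also have "\<dots> = v l i j"
      using False l col_index_nonzero[of l k j] col_position_col_index[OF k l, of j]
      by (simp add: interleave_def)
    finally show ?thesis .
  qed
qed

lemma interleave_column:
  assumes k: "1 \<le> k" and c: "1 \<le> c"
  obtains l j where "l \<in> {1..k+1}" "1 \<le> j" "col_index k l j = c"
    and "\<And>i. interleave k v i c = v l i j"
proof -
  obtain l j where pos: "col_position k c = (l, j)"
    by fastforce
  have "interleave k v i c = v l i j" for i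
    using c pos by (simp add: interleave_def)
  with col_index_col_position[OF k c pos] show ?thesis
    using that by blast
qed

lemma inR_interleave:
  assumes k: "1 \<le> k" and v: "\<And>l. l \<in> {1..k+1} \<Longrightarrow> inR (v l)"
  shows "inR (interleave k v)"
  unfolding inR_def
proof (intro conjI allI)
  fix c
  show "interleave k v 0 c = 0" "finite {i. interleave k v i c \<noteq> 0}"
  proof (atomize (full), cases "c = 0")
    case False
    then obtain l j where "l \<in> {1..k+1}" and col: "\<And>i. interleave k v i c = v l i j"
      using interleave_column[OF k, of c] by (metis less_one not_le)
    with v show "interleave k v 0 c = 0 \<and> finite {i. interleave k v i c \<noteq> 0}"
      by (simp add: inR_def)
  qed (simp add: interleave_def)
next
  fix i
  have "{c. interleave k v i c \<noteq> 0} \<subseteq> (\<Union>l\<in>{1..k+1}. col_index k l ` {j. v l i j \<noteq> 0})"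
  proof
    fix c assume "c \<in> {c. interleave k v i c \<noteq> 0}"
    then have nz: "interleave k v i c \<noteq> 0" and c: "1 \<le> c"
      by (auto simp: interleave_def split: if_splits)
    obtain l j where "l \<in> {1..k+1}" "col_index k l j = c" "interleave k v i c = v l i j"
      using interleave_column[OF k c] by metis
    with nz show "c \<in> (\<Union>l\<in>{1..k+1}. col_index k l ` {j. v l i j \<noteq> 0})"
      by auto
  qed
  moreover have "finite (\<Union>l\<in>{1..k+1}. col_index k l ` {j. v l i j \<noteq> 0})"
    using v by (auto simp: inR_def)
  ultimately show "finite {c. interleave k v i c \<noteq> 0}"
    by (rule finite_subset)
qed (simp add: interleave_def)

lemma interleave_inRk:
  assumes k: "1 \<le> k" and v: "v \<in> tuples k"
  shows "inRk k (interleave k v)"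
proof -
  let ?A = "interleave k v"
  let ?first = "{m. 2 \<le> m \<and> \<not> (\<exists>c. block_scalar k ?A m 2 c)} \<times> {2}"
  let ?shifted = "\<Union>l\<in>{1..k+1}. map_prod id (block_shift k l) ` non_scalar_blocks k (v l)"
  have vl: "inR (v l)" "finite (non_scalar_blocks k (v l))" if "l \<in> {1..k+1}" for l
    using v that by (simp_all add: tuples_def inRk_iff_finite_non_scalar_blocks)
  have R: "inR ?A"
    using inR_interleave[OF k] vl by blast
  have "non_scalar_blocks k ?A \<subseteq> ?first \<union> ?shifted"
  proof
    fix x assume x: "x \<in> non_scalar_blocks k ?A"
    then obtain m n where x_eq: "x = (m, n)" and m: "2 \<le> m" and n: "2 \<le> n"
      and ns: "\<not> (\<exists>c. block_scalar k ?A m n c)"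
      by (auto simp: non_scalar_blocks_def)
    show "x \<in> ?first \<union> ?shifted"
    proof (cases "n = 2")
      case True
      with x_eq m ns show ?thesis
        by simp
    next
      case False
      with n obtain l n0 where l: "l \<in> {1..k+1}" and n0: "2 \<le> n0" and n_eq: "n = block_shift k l n0"
        using block_shift_surj[of n k] by auto
      have "\<not> (\<exists>c. block_scalar k (v l) m n0 c)"
        using ns block_scalar_A_sub_iff[OF n0, of k ?A l m] A_sub_interleave[of k l v, OF k l vl(1)[OF l]]
        by (simp add: n_eq)
      with m n0 have "(m, n0) \<in> non_scalar_blocks k (v l)"
        by (simp add: non_scalar_blocks_def)
      then have "x \<in> map_prod id (block_shift k l) ` non_scalar_blocks k (v l)"
        by (force simp: x_eq n_eq)
      with l show ?thesis
        by blast
    qed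
  qed
  moreover have "finite (?first \<union> ?shifted)"
    using finite_non_scalar_blocks_in_column[OF R] vl by auto
  ultimately have "finite (non_scalar_blocks k ?A)"
    by (rule finite_subset)
  with R show ?thesis
    by (simp add: inRk_iff_finite_non_scalar_blocks)
qed

lemma Phi_left_linear: "left_linear k (Phi k)"
  by (auto simp: left_linear_def Phi_def mat_add_def mat_mult_def A_sub_def mat_zero_def fun_eq_iff)

lemma Phi_bij_betw:
  assumes k: "1 \<le> k"
  shows "bij_betw (Phi k) {A. inRk k A} (tuples k)"
proof (rule bij_betw_byWitness[where f' = "interleave k"])
  show "\<forall>A\<in>{A. inRk k A}. interleave k (Phi k A) = A"
    using interleave_Phi[OF k] by (simp add: inRk_def)
  show "\<forall>v\<in>tuples k. Phi k (interleave k v) = v"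
    using A_sub_interleave[OF k] by (auto simp: tuples_def Phi_def inRk_def fun_eq_iff)
  show "Phi k ` {A. inRk k A} \<subseteq> tuples k"
    using A_sub_inRk[OF k] by (auto simp: tuples_def Phi_def)
  show "interleave k ` tuples k \<subseteq> {A. inRk k A}"
    using interleave_inRk[OF k] by blast
qed

theorem mainTheorem4:
  fixes k :: nat
  assumes "1 \<le> k"
  shows "(\<exists>f. bij_betw f {A. inRk k A} (tuples k) \<and> left_linear k f) \<and>
         (\<forall>A. inRk k A \<longrightarrow> (\<forall>l\<in>{1..k+1}. inRk k (A_sub k A l))) \<and>
         bij_betw (Phi k) {A. inRk k A} (tuples k) \<and> left_linear k (Phi k)"
  using Phi_bij_betw[OF assms] Phi_left_linear A_sub_inRk[OF assms] by blast

end
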